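(* Let $T\ge 2$, $U$ a finite set of men and $W_1\subseteq W_2\subseteq\cdots\subseteq W_T$ finite sets of women, each man having a strict total order over $W_T$ and each woman a strict total order over $U$. Let $\Delta_t$ denote the set of stable matchings of $(U,W_t)$. Let $(M_1,\dots,M_T)\in\prod_{t=1}^T\Delta_t$ and let $M_1'\in\Delta_1$ be such that $M_1'$ men-dominates $M_1$. Then there exists $(M_2',\dots,M_T')\in\prod_{t=2}^T\Delta_t$ such that $\sum_{t=1}^{T-1}|M_t'\setminus M_{t+1}'|\le\sum_{t=1}^{T-1}|M_t\setminus M_{t+1}|$.
   Context: A matching is a set of man–woman pairs with each person in at most one pair; preferences in a sub-instance are restrictions of the given ones. A blocking pair of $M$ is a pair $(u,w)\notin M$ with ($u$ unmatched or preferring $w$ to his partner) and ($w$ unmatched or preferring $u$ to her partner); stable means no blocking pair. $M$ men-dominates $M'$ (both stable matchings of the same instance) if every man's partner in $M$ is at least as good for him as his partner in $M'$. *)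

theory Defs
  imports Main
begin

text \<open>Matchings are sets of (man, woman) pairs.  A preference of man u is a strict
relation PM u, where (w, w') \<in> PM u means that u prefers w to w'; similarly PW w for
woman w over men.\<close>

definition is_matching :: "'m set \<Rightarrow> 'w set \<Rightarrow> ('m \<times> 'w) set \<Rightarrow> bool" where
  "is_matching U W M \<longleftrightarrow> M \<subseteq> U \<times> W \<and>
     (\<forall>u w w'. (u, w) \<in> M \<longrightarrow> (u, w') \<in> M \<longrightarrow> w = w') \<and>
     (\<forall>u u' w. (u, w) \<in> M \<longrightarrow> (u', w) \<in> M \<longrightarrow> u = u')"

definition blocking_pair ::
  "('m \<Rightarrow> ('w \<times> 'w) set) \<Rightarrow> ('w \<Rightarrow> ('m \<times> 'm) set) \<Rightarrow> ('m \<times> 'w) set \<Rightarrow> 'm \<Rightarrow> 'w \<Rightarrow> bool" where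
  "blocking_pair PM PW M u w \<longleftrightarrow> (u, w) \<notin> M \<and>
     ((\<forall>w'. (u, w') \<notin> M) \<or> (\<exists>w'. (u, w') \<in> M \<and> (w, w') \<in> PM u)) \<and>
     ((\<forall>u'. (u', w) \<notin> M) \<or> (\<exists>u'. (u', w) \<in> M \<and> (u, u') \<in> PW w))"

definition stable_matching ::
  "'m set \<Rightarrow> 'w set \<Rightarrow> ('m \<Rightarrow> ('w \<times> 'w) set) \<Rightarrow> ('w \<Rightarrow> ('m \<times> 'm) set) \<Rightarrow> ('m \<times> 'w) set \<Rightarrow> bool" where
  "stable_matching U W PM PW M \<longleftrightarrow> is_matching U W M \<and>
     \<not> (\<exists>u\<in>U. \<exists>w\<in>W. blocking_pair PM PW M u w)"

definition men_dominates :: "'m set \<Rightarrow> ('m \<Rightarrow> ('w \<times> 'w) set) \<Rightarrow> ('m \<times> 'w) set \<Rightarrow> ('m \<times> 'w) set \<Rightarrow> bool" where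
  "men_dominates U PM M' M \<longleftrightarrow>
     (\<forall>u\<in>U. \<forall>w. (u, w) \<in> M \<longrightarrow> (\<exists>w'. (u, w') \<in> M' \<and> (w' = w \<or> (w', w) \<in> PM u)))"

end

theory Submission
  imports Defs
begin

text \<open>Let A be stable for (U, W) and B stable for (U, W'), with W \<subseteq> W'. Call a man improving
if he strictly prefers his A-partner to his B-partner (or is single in B). The improving men
are matched in A and in B to the same set of women, so giving every improving man his
A-partner and everyone else his B-partner is again a matching; it is stable for (U, W') and
men-dominates B. Starting from M1' and joining successively with M 2, ..., M T produces
M t' for every t, and by induction M t' men-dominates M t. A men-dominating stable matching
has at most as many pairs, and every man keeping his partner from M t to M (t+1) also keeps
his partner from M t' to M (t+1)'; together this bounds each term of the sum.\<close>

lemma blocking_pair_iff: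
  assumes "is_matching U W M"
  shows "blocking_pair PM PW M u w \<longleftrightarrow> (u, w) \<notin> M \<and>
    (\<forall>w'. (u, w') \<in> M \<longrightarrow> (w, w') \<in> PM u) \<and> (\<forall>u'. (u', w) \<in> M \<longrightarrow> (u, u') \<in> PW w)"
  using assms unfolding blocking_pair_def is_matching_def by blast

lemma stable_matchingI:
  assumes "is_matching U W M"
    and "\<And>u w. \<lbrakk>u \<in> U; w \<in> W; (u, w) \<notin> M; \<forall>w'. (u, w') \<in> M \<longrightarrow> (w, w') \<in> PM u;
      \<forall>u'. (u', w) \<in> M \<longrightarrow> (u, u') \<in> PW w\<rbrakk> \<Longrightarrow> False"
  shows "stable_matching U W PM PW M"
  using assms blocking_pair_iff[OF assms(1)] unfolding stable_matching_def by blast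

lemma stable_matching_no_blocking_pair:
  assumes "stable_matching U W PM PW M" "u \<in> U" "w \<in> W" "(u, w) \<notin> M"
    "\<forall>w'. (u, w') \<in> M \<longrightarrow> (w, w') \<in> PM u"
    "\<forall>u'. (u', w) \<in> M \<longrightarrow> (u, u') \<in> PW w"
  shows False
  using assms blocking_pair_iff[of U W M PM PW u w] unfolding stable_matching_def by blast

lemma stable_matching_subset: "stable_matching U W PM PW M \<Longrightarrow> M \<subseteq> U \<times> W"
  unfolding stable_matching_def is_matching_def by blast

lemma stable_matching_man_unique:
  "stable_matching U W PM PW M \<Longrightarrow> (u, w) \<in> M \<Longrightarrow> (u, w') \<in> M \<Longrightarrow> w = w'"
  unfolding stable_matching_def is_matching_def by blast

lemma stable_matching_woman_unique:
  "stable_matching U W PM PW M \<Longrightarrow> (u, w) \<in> M \<Longrightarrow> (u', w) \<in> M \<Longrightarrow> u = u'"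
  unfolding stable_matching_def is_matching_def by blast

lemma stable_matching_inj_on_fst: "stable_matching U W PM PW M \<Longrightarrow> inj_on fst M"
  by (auto simp: inj_on_def dest: stable_matching_man_unique)

lemma stable_matching_inj_on_snd: "stable_matching U W PM PW M \<Longrightarrow> inj_on snd M"
  by (auto simp: inj_on_def dest: stable_matching_woman_unique)

lemma stable_matching_finite:
  "finite U \<Longrightarrow> finite W \<Longrightarrow> stable_matching U W PM PW M \<Longrightarrow> finite M"
  by (rule finite_subset[OF stable_matching_subset]) auto

text \<open>A woman matched in M' but single in M would block M together with her M'-partner.\<close>
lemma men_dominates_card_le:
  assumes st: "stable_matching U W PM PW M" and st': "stable_matching U W PM PW M'"
    and dom: "men_dominates U PM M' M" and fin: "finite M"
  shows "card M' \<le> card M"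
proof -
  have "snd ` M' \<subseteq> snd ` M"
  proof
    fix w assume "w \<in> snd ` M'"
    then obtain u where uw: "(u, w) \<in> M'" by force
    have u: "u \<in> U" and w: "w \<in> W" using uw stable_matching_subset[OF st'] by auto
    show "w \<in> snd ` M"
    proof (rule ccontr)
      assume single: "w \<notin> snd ` M"
      have "(w, w') \<in> PM u" if "(u, w') \<in> M" for w'
        using dom u that stable_matching_man_unique[OF st' uw] single
        unfolding men_dominates_def by force
      then show False
        using stable_matching_no_blocking_pair[OF st u w] single by force
    qed
  qed
  then have "card (snd ` M') \<le> card (snd ` M)"
    using fin by (simp add: card_mono)
  then show ?thesis
    using card_image[OF stable_matching_inj_on_snd[OF st]]
      card_image[OF stable_matching_inj_on_snd[OF st']] by simp
qed

definition improving_men :: "('m \<Rightarrow> ('w \<times> 'w) set) \<Rightarrow> ('m \<times> 'w) set \<Rightarrow> ('m \<times> 'w) set \<Rightarrow> 'm set" where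
  "improving_men PM A B = {u. \<exists>w. (u, w) \<in> A \<and> (\<forall>w'. (u, w') \<in> B \<longrightarrow> (w, w') \<in> PM u)}"

definition men_join :: "('m \<Rightarrow> ('w \<times> 'w) set) \<Rightarrow> ('m \<times> 'w) set \<Rightarrow> ('m \<times> 'w) set \<Rightarrow> ('m \<times> 'w) set" where
  "men_join PM A B = {p \<in> A. fst p \<in> improving_men PM A B} \<union> {p \<in> B. fst p \<notin> improving_men PM A B}"

lemma men_join_cases:
  "(u, w) \<in> men_join PM A B \<longleftrightarrow>
    (u \<in> improving_men PM A B \<and> (u, w) \<in> A) \<or> (u \<notin> improving_men PM A B \<and> (u, w) \<in> B)"
  unfolding men_join_def by auto

text \<open>Index n holds the matching for time n + 1.\<close>
primrec men_join_seq ::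
  "('m \<Rightarrow> ('w \<times> 'w) set) \<Rightarrow> ('m \<times> 'w) set \<Rightarrow> (nat \<Rightarrow> ('m \<times> 'w) set) \<Rightarrow> nat \<Rightarrow> ('m \<times> 'w) set" where
  "men_join_seq PM A M 0 = A"
| "men_join_seq PM A M (Suc n) = men_join PM (men_join_seq PM A M n) (M (Suc (Suc n)))"

locale strict_preferences =
  fixes U :: "'m set" and X :: "'w set"
    and PM :: "'m \<Rightarrow> ('w \<times> 'w) set" and PW :: "'w \<Rightarrow> ('m \<times> 'm) set"
  assumes finite_men: "finite U"
    and men_order: "\<And>u. u \<in> U \<Longrightarrow> strict_linear_order_on X (PM u)"
    and women_order: "\<And>w. w \<in> X \<Longrightarrow> strict_linear_order_on U (PW w)"
begin

lemma PM_irrefl: "u \<in> U \<Longrightarrow> (w, w) \<notin> PM u"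
  using men_order unfolding strict_linear_order_on_def irrefl_def by blast

lemma PM_trans: "u \<in> U \<Longrightarrow> (a, b) \<in> PM u \<Longrightarrow> (b, c) \<in> PM u \<Longrightarrow> (a, c) \<in> PM u"
  using men_order unfolding strict_linear_order_on_def trans_def by blast

lemma PM_total: "u \<in> U \<Longrightarrow> a \<in> X \<Longrightarrow> b \<in> X \<Longrightarrow> a \<noteq> b \<Longrightarrow> (a, b) \<in> PM u \<or> (b, a) \<in> PM u"
  using men_order unfolding strict_linear_order_on_def total_on_def by blast

lemma PW_total: "w \<in> X \<Longrightarrow> a \<in> U \<Longrightarrow> b \<in> U \<Longrightarrow> a \<noteq> b \<Longrightarrow> (a, b) \<in> PW w \<or> (b, a) \<in> PW w"
  using women_order unfolding strict_linear_order_on_def total_on_def by blast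

context
  fixes Wa Wb A B
  assumes Wa_Wb: "Wa \<subseteq> Wb" and Wb_X: "Wb \<subseteq> X" and finite_Wb: "finite Wb"
    and stable_A: "stable_matching U Wa PM PW A" and stable_B: "stable_matching U Wb PM PW B"
begin

lemma finite_Wa: "finite Wa"
  using finite_Wb Wa_Wb finite_subset by blast

lemma finite_A: "finite A"
  using stable_matching_finite[OF finite_men finite_Wa stable_A] .

lemma finite_B: "finite B"
  using stable_matching_finite[OF finite_men finite_Wb stable_B] .

text \<open>Otherwise the improving man u and his A-partner w would block B, and her B-partner,
being preferred by w to u, would block A unless he is improving himself.\<close>
lemma improving_partner_matched_in_B:
  assumes u: "u \<in> improving_men PM A B" and uw: "(u, w) \<in> A"
  shows "\<exists>u'. (u', w) \<in> B \<and> u' \<in> improving_men PM A B"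
proof -
  have uU: "u \<in> U" and wa: "w \<in> Wa" using uw stable_matching_subset[OF stable_A] by auto
  have wX: "w \<in> X" using wa Wa_Wb Wb_X by blast
  have prefers_w: "\<forall>w'. (u, w') \<in> B \<longrightarrow> (w, w') \<in> PM u"
    using u stable_matching_man_unique[OF stable_A uw] unfolding improving_men_def by blast
  have not_uw: "(u, w) \<notin> B" using prefers_w PM_irrefl[OF uU] by blast
  obtain u' where u'w: "(u', w) \<in> B" and "(u, u') \<notin> PW w"
    using stable_matching_no_blocking_pair[OF stable_B uU _ not_uw prefers_w] wa Wa_Wb by blast
  moreover have u'U: "u' \<in> U" and "u' \<noteq> u" using u'w not_uw stable_matching_subset[OF stable_B] by auto
  ultimately have w_prefers: "(u', u) \<in> PW w" using PW_total[OF wX u'U uU] by blast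
  have "u' \<in> improving_men PM A B"
  proof (rule ccontr)
    assume not_improving: "u' \<notin> improving_men PM A B"
    have not_u'w: "(u', w) \<notin> A" using stable_matching_woman_unique[OF stable_A uw] \<open>u' \<noteq> u\<close> by blast
    have "(w, w1) \<in> PM u'" if u'w1: "(u', w1) \<in> A" for w1
    proof -
      have "(w1, w) \<notin> PM u'"
        using not_improving u'w1 stable_matching_man_unique[OF stable_B u'w] unfolding improving_men_def by blast
      moreover have "w1 \<noteq> w" "w1 \<in> X"
        using u'w1 not_u'w stable_matching_subset[OF stable_A] Wa_Wb Wb_X by auto
      ultimately show ?thesis using PM_total[OF u'U _ wX] by blast
    qed
    then show False
      using stable_matching_no_blocking_pair[OF stable_A u'U wa not_u'w]
        stable_matching_woman_unique[OF stable_A uw] w_prefers by blast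
  qed
  with u'w show ?thesis by blast
qed

lemma improving_men_same_women:
  "{w. \<exists>u\<in>improving_men PM A B. (u, w) \<in> A} = {w. \<exists>u\<in>improving_men PM A B. (u, w) \<in> B}"
    (is "?WA = ?WB")
proof -
  let ?P = "improving_men PM A B"
  let ?A = "A \<inter> ?P \<times> UNIV" and ?B = "B \<inter> ?P \<times> UNIV"
  have sub: "?WA \<subseteq> ?WB" using improving_partner_matched_in_B by blast
  have P_eq: "?P = fst ` ?A" unfolding improving_men_def by force
  have WB_eq: "?WB = snd ` ?B" and WA_eq: "?WA = snd ` ?A" by force+
  have "card ?WB \<le> card ?B" unfolding WB_eq using finite_B by (simp add: card_image_le)
  also have "card ?B = card (fst ` ?B)"
    using card_image[OF inj_on_subset[OF stable_matching_inj_on_fst[OF stable_B]]] by auto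
  also have "\<dots> \<le> card ?P"
    using finite_A by (intro card_mono) (subst P_eq, simp, force)
  also have "\<dots> = card (fst ` ?A)" using P_eq by (rule arg_cong)
  also have "\<dots> \<le> card ?A" using finite_A by (simp add: card_image_le)
  also have "\<dots> = card ?WA"
    unfolding WA_eq using card_image[OF inj_on_subset[OF stable_matching_inj_on_snd[OF stable_A]]] by auto
  finally have "card ?WB \<le> card ?WA" .
  moreover have "finite ?WB" unfolding WB_eq using finite_B by simp
  ultimately show ?thesis using card_seteq[OF _ sub] by blast
qed

lemma men_join_is_matching: "is_matching U Wb (men_join PM A B)"
  unfolding is_matching_def
proof (intro conjI allI impI)
  let ?P = "improving_men PM A B" and ?J = "men_join PM A B"
  show "?J \<subseteq> U \<times> Wb"
    using stable_matching_subset[OF stable_A] stable_matching_subset[OF stable_B] Wa_Wb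
    unfolding men_join_def by auto
  show "w = w'" if "(u, w) \<in> ?J" "(u, w') \<in> ?J" for u w w'
    using that stable_matching_man_unique[OF stable_A] stable_matching_man_unique[OF stable_B]
    unfolding men_join_cases by blast
  have no_mix: False if "(u, w) \<in> A" "u \<in> ?P" "(u', w) \<in> B" "u' \<notin> ?P" for u u' w
    using that improving_partner_matched_in_B stable_matching_woman_unique[OF stable_B] by blast
  show "u = u'" if "(u, w) \<in> ?J" "(u', w) \<in> ?J" for u u' w
    using that no_mix stable_matching_woman_unique[OF stable_A] stable_matching_woman_unique[OF stable_B]
    unfolding men_join_cases by blast
qed

lemma men_join_prefers_over_B:
  assumes "u \<in> U" "\<forall>w'. (u, w') \<in> men_join PM A B \<longrightarrow> (w, w') \<in> PM u" "(u, w') \<in> B"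
  shows "(w, w') \<in> PM u"
  using assms PM_trans unfolding men_join_cases improving_men_def by blast

lemma men_join_prefers_over_A:
  assumes uU: "u \<in> U" and prefers: "\<forall>w'. (u, w') \<in> men_join PM A B \<longrightarrow> (w, w') \<in> PM u"
    and uw': "(u, w') \<in> A"
  shows "(w, w') \<in> PM u"
proof (cases "u \<in> improving_men PM A B")
  case True
  then show ?thesis using prefers uw' unfolding men_join_cases by blast
next
  case False
  then obtain w'' where uw'': "(u, w'') \<in> B" and "(w', w'') \<notin> PM u"
    using uw' unfolding improving_men_def by blast
  moreover have "w' \<in> X" "w'' \<in> X"
    using uw' uw'' stable_matching_subset[OF stable_A] stable_matching_subset[OF stable_B] Wa_Wb Wb_X
    by auto
  moreover have "(w, w'') \<in> PM u" using prefers uw'' False unfolding men_join_cases by blast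
  ultimately show ?thesis using PM_total[OF uU] PM_trans[OF uU] by metis
qed

text \<open>A pair (u, w) blocking the join also blocks B, unless w's B-partner is improving; then
w is A-matched to an improving man, i.e. matched to him in the join too, and (u, w) blocks A.\<close>
lemma stable_men_join: "stable_matching U Wb PM PW (men_join PM A B)"
proof (rule stable_matchingI[OF men_join_is_matching])
  let ?P = "improving_men PM A B" and ?J = "men_join PM A B"
  fix u w
  assume uU: "u \<in> U" and wb: "w \<in> Wb" and "(u, w) \<notin> ?J"
    and man_J: "\<forall>w'. (u, w') \<in> ?J \<longrightarrow> (w, w') \<in> PM u"
    and woman_J: "\<forall>u'. (u', w) \<in> ?J \<longrightarrow> (u, u') \<in> PW w"
  have man_B: "\<forall>w'. (u, w') \<in> B \<longrightarrow> (w, w') \<in> PM u"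
    using men_join_prefers_over_B[OF uU man_J] by blast
  have "(u, w) \<notin> B" using man_B PM_irrefl[OF uU] by blast
  then obtain u'' where u''w: "(u'', w) \<in> B" and "(u, u'') \<notin> PW w"
    using stable_matching_no_blocking_pair[OF stable_B uU wb _ man_B] by blast
  then have "u'' \<in> ?P" using woman_J unfolding men_join_cases by blast
  then obtain u3 where u3: "u3 \<in> ?P" "(u3, w) \<in> A"
    using u''w improving_men_same_women by blast
  then have "(u, u3) \<in> PW w" using woman_J unfolding men_join_cases by blast
  then have woman_A: "\<forall>u'. (u', w) \<in> A \<longrightarrow> (u, u') \<in> PW w"
    using stable_matching_woman_unique[OF stable_A u3(2)] by blast
  have man_A: "\<forall>w'. (u, w') \<in> A \<longrightarrow> (w, w') \<in> PM u"
    using men_join_prefers_over_A[OF uU man_J] by blast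
  have "w \<in> Wa" using u3(2) stable_matching_subset[OF stable_A] by blast
  moreover have "(u, w) \<notin> A" using man_A PM_irrefl[OF uU] by blast
  ultimately show False using stable_matching_no_blocking_pair[OF stable_A uU _ _ man_A woman_A] by blast
qed

lemma men_join_dominates: "men_dominates U PM (men_join PM A B) B"
  unfolding men_dominates_def men_join_cases improving_men_def by blast

lemma men_join_keeps_shared_men:
  assumes A0_U: "A0 \<subseteq> U \<times> UNIV" and dom: "men_dominates U PM A A0"
  shows "fst ` (A0 \<inter> B) \<subseteq> fst ` (A \<inter> men_join PM A B)"
proof
  fix u assume "u \<in> fst ` (A0 \<inter> B)"
  then obtain w where uw: "(u, w) \<in> A0" "(u, w) \<in> B" by force
  have uU: "u \<in> U" using uw A0_U by auto
  obtain w' where uw': "(u, w') \<in> A" and "w' = w \<or> (w', w) \<in> PM u"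
    using dom uU uw(1) unfolding men_dominates_def by blast
  then consider "w' = w" "u \<notin> improving_men PM A B" | "u \<in> improving_men PM A B"
    using stable_matching_man_unique[OF stable_A] stable_matching_man_unique[OF stable_B uw(2)]
      PM_irrefl[OF uU] unfolding improving_men_def by blast
  then have "(u, w') \<in> men_join PM A B"
    by cases (use uw uw' in \<open>auto simp: men_join_cases\<close>)
  with uw' show "u \<in> fst ` (A \<inter> men_join PM A B)" by force
qed

lemma card_diff_men_join_le:
  assumes stable_A0: "stable_matching U Wa PM PW A0" and dom: "men_dominates U PM A A0"
  shows "card (A - men_join PM A B) \<le> card (A0 - B)"
proof -
  let ?J = "men_join PM A B"
  have fin_A0: "finite A0"
    using stable_matching_finite[OF finite_men finite_Wa stable_A0] .
  have "card (A0 \<inter> B) = card (fst ` (A0 \<inter> B))"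
    using card_image[OF inj_on_subset[OF stable_matching_inj_on_fst[OF stable_A0]]] by auto
  also have "\<dots> \<le> card (fst ` (A \<inter> ?J))"
    using men_join_keeps_shared_men[OF _ dom] stable_matching_subset[OF stable_A0] finite_A
    by (intro card_mono) auto
  also have "\<dots> \<le> card (A \<inter> ?J)" using finite_A by (simp add: card_image_le)
  finally have "card (A0 \<inter> B) \<le> card (A \<inter> ?J)" .
  moreover have "card A \<le> card A0" using men_dominates_card_le[OF stable_A0 stable_A dom fin_A0] .
  moreover have "card (A \<inter> ?J) \<le> card A" using finite_A by (simp add: card_mono)
  ultimately show ?thesis using finite_A fin_A0 by (simp add: card_Diff_subset_Int)
qed

end

context
  fixes T :: nat and W :: "nat \<Rightarrow> 'w set" and M :: "nat \<Rightarrow> ('m \<times> 'w) set" and A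
  assumes W_mono: "\<And>t. t \<in> {1..<T} \<Longrightarrow> W t \<subseteq> W (Suc t)"
    and W_X: "\<And>t. t \<in> {1..T} \<Longrightarrow> W t \<subseteq> X"
    and finite_W: "\<And>t. t \<in> {1..T} \<Longrightarrow> finite (W t)"
    and stable_M: "\<And>t. t \<in> {1..T} \<Longrightarrow> stable_matching U (W t) PM PW (M t)"
    and stable_A: "stable_matching U (W 1) PM PW A"
    and dom_A: "men_dominates U PM A (M 1)"
begin

lemma men_join_seq_stable_dominates:
  "n < T \<Longrightarrow> stable_matching U (W (Suc n)) PM PW (men_join_seq PM A M n) \<and>
    men_dominates U PM (men_join_seq PM A M n) (M (Suc n))"
proof (induction n)
  case 0
  show ?case using stable_A dom_A by simp
next
  case (Suc n)
  then have "stable_matching U (W (Suc n)) PM PW (men_join_seq PM A M n)" by simp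
  moreover have "W (Suc n) \<subseteq> W (Suc (Suc n))" "W (Suc (Suc n)) \<subseteq> X" "finite (W (Suc (Suc n)))"
    "stable_matching U (W (Suc (Suc n))) PM PW (M (Suc (Suc n)))"
    using Suc.prems W_mono W_X finite_W stable_M by auto
  ultimately show ?case using stable_men_join men_join_dominates by simp
qed

lemma card_diff_men_join_seq_le:
  assumes "Suc n < T"
  shows "card (men_join_seq PM A M n - men_join_seq PM A M (Suc n)) \<le> card (M (Suc n) - M (Suc (Suc n)))"
proof -
  have "W (Suc n) \<subseteq> W (Suc (Suc n))" "W (Suc (Suc n)) \<subseteq> X" "finite (W (Suc (Suc n)))"
    "stable_matching U (W (Suc n)) PM PW (M (Suc n))"
    "stable_matching U (W (Suc (Suc n))) PM PW (M (Suc (Suc n)))"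
    using assms W_mono W_X finite_W stable_M by auto
  with men_join_seq_stable_dominates[of n] assms show ?thesis
    using card_diff_men_join_le by simp
qed

end

end

lemma subset_chain_le:
  assumes mono: "\<And>t. t \<in> {a..<b} \<Longrightarrow> W t \<subseteq> W (Suc t)" and "a \<le> s" "s \<le> b"
  shows "W s \<subseteq> W b"
  using \<open>s \<le> b\<close> \<open>a \<le> s\<close>
proof (induction rule: inc_induct)
  case (step n)
  then show ?case using mono[of n] by auto
qed simp

theorem lemma6:
  fixes T :: nat and U :: "'m set" and W :: "nat \<Rightarrow> 'w set"
    and PM :: "'m \<Rightarrow> ('w \<times> 'w) set" and PW :: "'w \<Rightarrow> ('m \<times> 'm) set"
    and M :: "nat \<Rightarrow> ('m \<times> 'w) set" and M1' :: "('m \<times> 'w) set"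
  assumes "T \<ge> 2"
    and "finite U"
    and "\<And>t. t \<in> {1..T} \<Longrightarrow> finite (W t)"
    and "\<And>t. t \<in> {1..<T} \<Longrightarrow> W t \<subseteq> W (Suc t)"
    and "\<And>u. u \<in> U \<Longrightarrow> strict_linear_order_on (W T) (PM u)"
    and "\<And>w. w \<in> W T \<Longrightarrow> strict_linear_order_on U (PW w)"
    and "\<And>t. t \<in> {1..T} \<Longrightarrow> stable_matching U (W t) PM PW (M t)"
    and "stable_matching U (W 1) PM PW M1'"
    and "men_dominates U PM M1' (M 1)"
  shows "\<exists>M'. M' 1 = M1' \<and> (\<forall>t\<in>{2..T}. stable_matching U (W t) PM PW (M' t)) \<and>
           (\<Sum>t\<in>{1..<T}. card (M' t - M' (Suc t))) \<le> (\<Sum>t\<in>{1..<T}. card (M t - M (Suc t)))"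
proof -
  interpret strict_preferences U "W T" PM PW
    using assms(2,5,6) by unfold_locales
  have W_T: "W t \<subseteq> W T" if "t \<in> {1..T}" for t
    using subset_chain_le[of 1 T W t] assms(4) that by auto
  note seq_facts =
    men_join_seq_stable_dominates[where T = T and A = M1', OF assms(4) W_T assms(3,7,8,9)]
    card_diff_men_join_seq_le[where T = T and A = M1', OF assms(4) W_T assms(3,7,8,9)]
  define M' where "M' t = men_join_seq PM M1' M (t - 1)" for t
  have "stable_matching U (W t) PM PW (M' t)" if "t \<in> {2..T}" for t
    using seq_facts(1)[where n = "t - 1"] that by (auto simp: M'_def)
  moreover have "card (M' t - M' (Suc t)) \<le> card (M t - M (Suc t))" if "t \<in> {1..<T}" for t
    using seq_facts(2)[where n = "t - 1"] that by (cases t) (simp_all add: M'_def)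
  ultimately show ?thesis
    by (intro exI[of _ M'] conjI ballI sum_mono) (simp_all add: M'_def)
qed

end
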